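(* Let $G$ be a finite graph and $\alpha(G)$ its independence number. (a) For every integer $b\ge 1$, $\phi^0_b(G)\ge \phi(G)$; moreover $\lim_{b\to\infty}\phi^0_b(G)=\phi(G)$. (b) For all integers $a'\ge a\ge 0$ and $b'\ge b\ge 1$, $\phi^a_b(G)\ge \phi^{a'}_{b'}(G)$. (c) For all integers $a\ge 0$ and $b\ge 1$, $\phi^a_b(G)\ge \frac{|V(G)|-a\alpha(G)}{\bar{\alpha}(G)}$.
   Context: An independent set $F$ of $G$ is a free independent set if it is contained in at least two distinct maximal independent sets of $G$; $\bar{\alpha}(G)$ is the maximum size of a free independent set. An edge $e=uv$ supports a free independent set $F$ if $F\cap(N(u)\cup N(v))=\emptyset$. The free chromatic number $\phi(G)$ is the minimum $t$ such that $V(G)$ can be partitioned into $t$ free independent sets ($\infty$ if impossible). For integers $a\ge0$, $b\ge1$, the $(a,b)$-free chromatic number $\phi^a_b(G)$ is the minimum natural number $t$ such that: (1) $V(G)$ is partitioned into independent sets $V_1,\dots,V_t$, of which $V_1,\dots,V_{t-a}$ are free independent sets; and (2) there are edges $e_1,\dots,e_{t-a}$ (not necessarily distinct) with $e_i$ supporting $V_i$ for each $i$, such that every vertex $v$ is incident with at most $b$ of the edges $e_1,\dots,e_{t-a}$. If no such $t$ exists, $\phi^a_b(G)=\infty$. *)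

theory Defs
  imports Main "HOL-Library.Extended_Real"
begin

definition fin_graph :: "'a set \<Rightarrow> 'a set set \<Rightarrow> bool" where
  "fin_graph V E \<longleftrightarrow> finite V \<and> (\<forall>e\<in>E. \<exists>u v. u \<noteq> v \<and> u \<in> V \<and> v \<in> V \<and> e = {u, v})"

definition nbhd :: "'a set set \<Rightarrow> 'a \<Rightarrow> 'a set" where
  "nbhd E u = {w. {u, w} \<in> E}"

definition indep :: "'a set \<Rightarrow> 'a set set \<Rightarrow> 'a set \<Rightarrow> bool" where
  "indep V E S \<longleftrightarrow> S \<subseteq> V \<and> (\<forall>u\<in>S. \<forall>v\<in>S. {u, v} \<notin> E)"

definition max_indep :: "'a set \<Rightarrow> 'a set set \<Rightarrow> 'a set \<Rightarrow> bool" where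
  "max_indep V E S \<longleftrightarrow> indep V E S \<and> (\<forall>T. indep V E T \<and> S \<subseteq> T \<longrightarrow> T = S)"

definition free_indep :: "'a set \<Rightarrow> 'a set set \<Rightarrow> 'a set \<Rightarrow> bool" where
  "free_indep V E F \<longleftrightarrow> indep V E F \<and>
     (\<exists>M1 M2. max_indep V E M1 \<and> max_indep V E M2 \<and> M1 \<noteq> M2 \<and> F \<subseteq> M1 \<and> F \<subseteq> M2)"

definition indep_num :: "'a set \<Rightarrow> 'a set set \<Rightarrow> nat" where
  "indep_num V E = Max (card ` {S. indep V E S})"

definition free_indep_num :: "'a set \<Rightarrow> 'a set set \<Rightarrow> nat" where
  "free_indep_num V E =
     (if \<exists>F. free_indep V E F then Max (card ` {F. free_indep V E F}) else 0)"

definition supports :: "'a set set \<Rightarrow> 'a set \<Rightarrow> 'a set \<Rightarrow> bool" where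
  "supports E e F \<longleftrightarrow> (\<exists>u v. e = {u, v} \<and> e \<in> E \<and> F \<inter> (nbhd E u \<union> nbhd E v) = {})"

definition indep_partition :: "'a set \<Rightarrow> 'a set set \<Rightarrow> nat \<Rightarrow> (nat \<Rightarrow> 'a set) \<Rightarrow> bool" where
  "indep_partition V E t P \<longleftrightarrow>
     (\<forall>i<t. P i \<noteq> {} \<and> indep V E (P i)) \<and>
     (\<forall>i<t. \<forall>j<t. i \<noteq> j \<longrightarrow> P i \<inter> P j = {}) \<and>
     (\<Union>i<t. P i) = V"

text \<open>Free chromatic number (\<infinity> if no such partition exists, since Inf {} = \<infinity>).\<close>
definition free_chrom :: "'a set \<Rightarrow> 'a set set \<Rightarrow> enat" where
  "free_chrom V E = Inf {enat t | t. \<exists>P. indep_partition V E t P \<and> (\<forall>i<t. free_indep V E (P i))}"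

text \<open>Parts P 0..P (t-a-1) are the free ones (V_1..V_{t-a});
  edges ed 0..ed (t-a-1) with ed i supporting P i; every vertex lies on at most b of them,
  counted with multiplicity. (t - a is truncated subtraction: if t \<le> a no part must be free.)\<close>
definition ab_free_chrom :: "nat \<Rightarrow> nat \<Rightarrow> 'a set \<Rightarrow> 'a set set \<Rightarrow> enat" where
  "ab_free_chrom a b V E = Inf {enat t | t. \<exists>P ed. indep_partition V E t P \<and>
      (\<forall>i<t - a. free_indep V E (P i) \<and> ed i \<in> E \<and> supports E (ed i) (P i)) \<and>
      (\<forall>v\<in>V. card {i. i < t - a \<and> v \<in> ed i} \<le> b)}"

end

theory Submission
  imports Defs
begin

text \<open>Every part of an (0,b)-free colouring is free, so (a) is a comparison of
  infima; conversely a free part lies in two distinct maximal independent sets M1, M2, and for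
  u \<in> M1 - M2 maximality of M2 yields an edge uw with w \<in> M2, which supports M1 \<inter> M2.
  Choosing such an edge per part shows that an optimal free colouring with t parts is an
  (0,b)-free colouring once b \<ge> t, so the sequence is eventually constant. Weakening a and b
  only relaxes the constraints, giving (b). For (c), the t - a free parts have at most
  \<bar>\<alpha>(G) vertices and the remaining a parts at most \<alpha>(G).\<close>

definition free_colouring :: "'a set \<Rightarrow> 'a set set \<Rightarrow> nat \<Rightarrow> (nat \<Rightarrow> 'a set) \<Rightarrow> bool" where
  "free_colouring V E t P \<longleftrightarrow> indep_partition V E t P \<and> (\<forall>i<t. free_indep V E (P i))"

definition ab_free_colouring ::
    "nat \<Rightarrow> nat \<Rightarrow> 'a set \<Rightarrow> 'a set set \<Rightarrow> nat \<Rightarrow> (nat \<Rightarrow> 'a set) \<Rightarrow> (nat \<Rightarrow> 'a set) \<Rightarrow> bool" where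
  "ab_free_colouring a b V E t P ed \<longleftrightarrow> indep_partition V E t P \<and>
      (\<forall>i<t - a. free_indep V E (P i) \<and> ed i \<in> E \<and> supports E (ed i) (P i)) \<and>
      (\<forall>v\<in>V. card {i. i < t - a \<and> v \<in> ed i} \<le> b)"

lemma free_chrom_eq_Inf_free_colouring:
  "free_chrom V E = Inf {enat t | t. \<exists>P. free_colouring V E t P}"
  by (simp add: free_chrom_def free_colouring_def)

lemma ab_free_chrom_eq_Inf_ab_free_colouring:
  "ab_free_chrom a b V E = Inf {enat t | t. \<exists>P ed. ab_free_colouring a b V E t P ed}"
  by (simp add: ab_free_chrom_def ab_free_colouring_def)

lemma Inf_enat_mono:
  assumes "\<And>t. Q t \<Longrightarrow> R t"
  shows "Inf {enat t | t. R t} \<le> Inf {enat t | t. Q t}"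
  by (rule Inf_superset_mono) (use assms in blast)

lemma Inf_enat_attained:
  assumes "Inf {enat t | t. Q t} \<noteq> \<infinity>"
  obtains t where "Q t" "Inf {enat t | t. Q t} = enat t"
proof -
  have "{enat t | t. Q t} \<noteq> {}" using assms by (metis Inf_empty top_enat_def)
  then obtain k where "k \<in> {enat t | t. Q t}" by blast
  then have "Inf {enat t | t. Q t} \<in> {enat t | t. Q t}" by (rule wellorder_InfI)
  then show ?thesis using that by blast
qed

lemma fin_graph_no_loop: "fin_graph V E \<Longrightarrow> {u, u} \<notin> E"
  unfolding fin_graph_def by (metis doubleton_eq_iff)

lemma max_indep_neighbour:
  assumes G: "fin_graph V E" and M: "max_indep V E M" and u: "u \<in> V" "u \<notin> M"
  obtains w where "w \<in> M" "{u, w} \<in> E"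
proof -
  have indM: "indep V E M" using M by (simp add: max_indep_def)
  have "\<not> indep V E (insert u M)"
    using M u(2) unfolding max_indep_def by blast
  then obtain x y where "x \<in> insert u M" "y \<in> insert u M" "{x, y} \<in> E"
    using indM u(1) unfolding indep_def by blast
  then show ?thesis
    using that indM fin_graph_no_loop[OF G] unfolding indep_def by (auto simp: insert_commute)
qed

text \<open>An edge with one end in each of two independent sets has no neighbour in their
  intersection.\<close>

lemma supports_inter_max_indep:
  assumes G: "fin_graph V E" and M1: "max_indep V E M1" and M2: "max_indep V E M2"
    and u: "u \<in> M1" "u \<notin> M2"
  shows "\<exists>e. supports E e (M1 \<inter> M2)"
proof -
  have ind1: "indep V E M1" and ind2: "indep V E M2"
    using M1 M2 by (auto simp: max_indep_def)
  have "u \<in> V" using ind1 u(1) by (auto simp: indep_def)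
  then obtain w where w: "w \<in> M2" "{u, w} \<in> E" using max_indep_neighbour[OF G M2] u(2) by blast
  have "(M1 \<inter> M2) \<inter> (nbhd E u \<union> nbhd E w) = {}"
    using ind1 ind2 u(1) w(1) unfolding indep_def nbhd_def by blast
  then show ?thesis using w(2) unfolding supports_def by blast
qed

lemma free_indep_supported:
  assumes G: "fin_graph V E" and F: "free_indep V E F"
  obtains e where "e \<in> E" "supports E e F"
proof -
  obtain M1 M2 where M: "max_indep V E M1" "max_indep V E M2" "M1 \<noteq> M2"
    and F12: "F \<subseteq> M1 \<inter> M2"
    using F unfolding free_indep_def by blast
  have "\<exists>e. supports E e (M1 \<inter> M2)"
  proof (cases "M1 \<subseteq> M2")
    case True
    then obtain u where "u \<in> M2" "u \<notin> M1" using M(3) by blast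
    then show ?thesis using supports_inter_max_indep[OF G M(2) M(1)] by (simp add: Int_commute)
  next
    case False
    then show ?thesis using supports_inter_max_indep[OF G M(1) M(2)] by blast
  qed
  then obtain e where "supports E e (M1 \<inter> M2)" by blast
  then have "e \<in> E" "supports E e F" using F12 unfolding supports_def by blast+
  then show ?thesis by (rule that)
qed

lemma ab_free_colouring_0_imp_free_colouring:
  "ab_free_colouring 0 b V E t P ed \<Longrightarrow> free_colouring V E t P"
  by (simp add: ab_free_colouring_def free_colouring_def)

lemma free_colouring_imp_ab_free_colouring_0:
  assumes G: "fin_graph V E" and P: "free_colouring V E t P" and "t \<le> b"
  obtains ed where "ab_free_colouring 0 b V E t P ed"
proof -
  have "\<exists>e. e \<in> E \<and> supports E e (P i)" if "i < t" for i
    using P that unfolding free_colouring_def by (metis free_indep_supported[OF G])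
  then obtain ed where ed: "\<And>i. i < t \<Longrightarrow> ed i \<in> E \<and> supports E (ed i) (P i)"
    by metis
  have "card {i. i < t \<and> v \<in> ed i} \<le> b" for v
  proof -
    have "card {i. i < t \<and> v \<in> ed i} \<le> card {..<t}" by (rule card_mono) auto
    then show ?thesis using \<open>t \<le> b\<close> by simp
  qed
  then have "ab_free_colouring 0 b V E t P ed"
    using P ed unfolding ab_free_colouring_def free_colouring_def by simp
  then show ?thesis by (rule that)
qed

lemma ab_free_colouring_mono:
  assumes P: "ab_free_colouring a b V E t P ed" and "a \<le> a'" "b \<le> b'"
  shows "ab_free_colouring a' b' V E t P ed"
proof -
  have "card {i. i < t - a' \<and> v \<in> ed i} \<le> b'" if "v \<in> V" for v
  proof -
    have "{i. i < t - a' \<and> v \<in> ed i} \<subseteq> {i. i < t - a \<and> v \<in> ed i}" using \<open>a \<le> a'\<close> by auto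
    then have "card {i. i < t - a' \<and> v \<in> ed i} \<le> card {i. i < t - a \<and> v \<in> ed i}"
      by (rule card_mono[rotated]) simp
    also have "\<dots> \<le> b" using P that by (simp add: ab_free_colouring_def)
    finally show ?thesis using \<open>b \<le> b'\<close> by simp
  qed
  then show ?thesis using P \<open>a \<le> a'\<close> by (simp add: ab_free_colouring_def)
qed

lemma free_chrom_le_ab_free_chrom_0: "free_chrom V E \<le> ab_free_chrom 0 b V E"
  unfolding free_chrom_eq_Inf_free_colouring ab_free_chrom_eq_Inf_ab_free_colouring
  by (rule Inf_enat_mono) (blast dest: ab_free_colouring_0_imp_free_colouring)

lemma ab_free_chrom_antimono:
  assumes "a \<le> a'" "b \<le> b'"
  shows "ab_free_chrom a' b' V E \<le> ab_free_chrom a b V E"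
  unfolding ab_free_chrom_eq_Inf_ab_free_colouring
  by (rule Inf_enat_mono) (blast intro: ab_free_colouring_mono[OF _ assms])

lemma ab_free_chrom_0_eventually_free_chrom:
  assumes G: "fin_graph V E"
  shows "\<exists>N. \<forall>b\<ge>N. ab_free_chrom 0 b V E = free_chrom V E"
proof (cases "free_chrom V E = \<infinity>")
  case True
  then show ?thesis
    using free_chrom_le_ab_free_chrom_0[of V E]
    by (simp add: top.extremum_unique[where 'a=enat, unfolded top_enat_def])
next
  case False
  then obtain t P where P: "free_colouring V E t P" and t: "free_chrom V E = enat t"
    unfolding free_chrom_eq_Inf_free_colouring by (rule Inf_enat_attained) blast
  have "ab_free_chrom 0 b V E \<le> enat t" if tb: "t \<le> b" for b
  proof -
    obtain ed where "ab_free_colouring 0 b V E t P ed"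
      using free_colouring_imp_ab_free_colouring_0[OF G P tb] .
    then show ?thesis unfolding ab_free_chrom_eq_Inf_ab_free_colouring by (blast intro: Inf_lower)
  qed
  then have "\<forall>b\<ge>t. ab_free_chrom 0 b V E = free_chrom V E"
    using free_chrom_le_ab_free_chrom_0[of V E] t by (simp add: order_antisym)
  then show ?thesis by blast
qed

lemma card_le_indep_num:
  assumes G: "fin_graph V E" and S: "indep V E S"
  shows "card S \<le> indep_num V E"
proof -
  have "{S. indep V E S} \<subseteq> Pow V" by (auto simp: indep_def)
  then have "finite {S. indep V E S}"
    using G by (simp add: fin_graph_def finite_subset)
  then show ?thesis unfolding indep_num_def using S by simp
qed

lemma card_le_free_indep_num:
  assumes G: "fin_graph V E" and F: "free_indep V E F"
  shows "card F \<le> free_indep_num V E"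
proof -
  have "{F. free_indep V E F} \<subseteq> Pow V" by (auto simp: free_indep_def indep_def)
  then have "finite {F. free_indep V E F}"
    using G by (simp add: fin_graph_def finite_subset)
  then show ?thesis unfolding free_indep_num_def using F by auto
qed

lemma card_eq_sum_indep_partition:
  assumes G: "fin_graph V E" and P: "indep_partition V E t P"
  shows "card V = (\<Sum>i<t. card (P i))"
proof -
  have V: "V = (\<Union>i<t. P i)" using P by (simp add: indep_partition_def)
  have "\<forall>i\<in>{..<t}. finite (P i)" using G V by (auto simp: fin_graph_def intro: finite_subset)
  then have "card (\<Union>i<t. P i) = (\<Sum>i<t. card (P i))"
    using P by (intro card_UN_disjoint) (auto simp: indep_partition_def)
  then show ?thesis using V by simp
qed

lemma card_le_ab_free_colouring:
  assumes G: "fin_graph V E" and P: "ab_free_colouring a b V E t P ed"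
  shows "card V \<le> (t - a) * free_indep_num V E + a * indep_num V E"
proof -
  let ?\<alpha> = "indep_num V E" and ?\<beta> = "free_indep_num V E"
  have part: "indep_partition V E t P" using P by (simp add: ab_free_colouring_def)
  have \<alpha>: "card (P i) \<le> ?\<alpha>" if "i < t" for i
    using part that card_le_indep_num[OF G] by (simp add: indep_partition_def)
  have \<beta>: "card (P i) \<le> ?\<beta>" if "i < t - a" for i
    using P that card_le_free_indep_num[OF G] by (simp add: ab_free_colouring_def)
  have split: "{..<t} = {..<t - a} \<union> {t - a..<t}" by auto
  have "card V = (\<Sum>i<t - a. card (P i)) + (\<Sum>i\<in>{t - a..<t}. card (P i))"
    unfolding card_eq_sum_indep_partition[OF G part] split by (rule sum.union_disjoint) auto
  also have "\<dots> \<le> (\<Sum>i<t - a. ?\<beta>) + (\<Sum>i\<in>{t - a..<t}. ?\<alpha>)"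
    by (intro add_mono sum_mono) (use \<alpha> \<beta> in auto)
  also have "\<dots> = (t - a) * ?\<beta> + (t - (t - a)) * ?\<alpha>" by simp
  also have "\<dots> \<le> (t - a) * ?\<beta> + a * ?\<alpha>" by (intro add_left_mono mult_right_mono) auto
  finally show ?thesis .
qed

text \<open>When t \<le> a the numerator is nonpositive, which matters for \<bar>\<alpha>(G) = 0 since
  division by 0 in ereal multiplies by \<infinity>; otherwise a free part exists, so \<bar>\<alpha>(G) \<ge> 1.\<close>

lemma ab_free_colouring_lower_bound:
  assumes G: "fin_graph V E" and P: "ab_free_colouring a b V E t P ed"
  shows "ereal (real (card V) - real a * real (indep_num V E)) / ereal (real (free_indep_num V E))
           \<le> ereal (real t)"
proof -
  let ?\<alpha> = "indep_num V E" and ?\<beta> = "free_indep_num V E"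
  have bound: "real (card V) - real a * real ?\<alpha> \<le> real (t - a) * real ?\<beta>"
    using card_le_ab_free_colouring[OF G P] by (simp flip: of_nat_mult of_nat_add)
  show ?thesis
  proof (cases "t \<le> a")
    case True
    then have nonpos: "real (card V) - real a * real ?\<alpha> \<le> 0" using bound by simp
    then have "(real (card V) - real a * real ?\<alpha>) / real ?\<beta> \<le> 0"
      by (simp add: divide_nonpos_nonneg)
    then show ?thesis using nonpos by (cases "?\<beta> = 0") simp_all
  next
    case False
    then have "P 0 \<noteq> {}" and free0: "free_indep V E (P 0)"
      using P by (auto simp: ab_free_colouring_def indep_partition_def)
    moreover have "finite (P 0)"
      using G free0 by (auto simp: fin_graph_def free_indep_def indep_def intro: finite_subset)
    ultimately have "0 < card (P 0)" by (simp add: card_gt_0_iff)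
    then have \<beta>_pos: "1 \<le> ?\<beta>" using card_le_free_indep_num[OF G free0] by linarith
    moreover have "real (card V) - real a * real ?\<alpha> \<le> real t * real ?\<beta>"
      using bound mult_right_mono[of "real (t - a)" "real t" "real ?\<beta>"] by simp
    ultimately have "(real (card V) - real a * real ?\<alpha>) / real ?\<beta> \<le> real t"
      by (simp add: divide_le_eq)
    then show ?thesis using \<beta>_pos by simp
  qed
qed

lemma ab_free_chrom_lower_bound:
  assumes G: "fin_graph V E"
  shows "ereal (real (card V) - real a * real (indep_num V E)) / ereal (real (free_indep_num V E))
           \<le> ereal_of_enat (ab_free_chrom a b V E)"
proof (cases "ab_free_chrom a b V E = \<infinity>")
  case False
  then obtain t P ed where "ab_free_colouring a b V E t P ed" "ab_free_chrom a b V E = enat t"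
    unfolding ab_free_chrom_eq_Inf_ab_free_colouring by (rule Inf_enat_attained) blast
  then show ?thesis using ab_free_colouring_lower_bound[OF G] by simp
qed simp

theorem mainTheorem6:
  fixes V :: "'a set" and E :: "'a set set"
  assumes G: "fin_graph V E"
  shows "(\<forall>b\<ge>1. ab_free_chrom 0 b V E \<ge> free_chrom V E)
       \<and> ((\<lambda>b. ab_free_chrom 0 b V E) \<longlonglongrightarrow> free_chrom V E)
       \<and> (\<forall>a a' b b'. a \<le> a' \<and> 1 \<le> b \<and> b \<le> b' \<longrightarrow>
            ab_free_chrom a b V E \<ge> ab_free_chrom a' b' V E)
       \<and> (\<forall>a b. 1 \<le> b \<longrightarrow>
            ereal (real (card V) - real a * real (indep_num V E)) / ereal (real (free_indep_num V E))
              \<le> ereal_of_enat (ab_free_chrom a b V E))"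
proof (intro conjI allI impI)
  show "free_chrom V E \<le> ab_free_chrom 0 b V E" for b
    by (rule free_chrom_le_ab_free_chrom_0)
  show "(\<lambda>b. ab_free_chrom 0 b V E) \<longlonglongrightarrow> free_chrom V E"
    using ab_free_chrom_0_eventually_free_chrom[OF G]
    by (intro tendsto_eventually) (simp add: eventually_sequentially)
  show "ab_free_chrom a' b' V E \<le> ab_free_chrom a b V E"
    if "a \<le> a' \<and> 1 \<le> b \<and> b \<le> b'" for a a' b b'
    using that by (simp add: ab_free_chrom_antimono)
  show "ereal (real (card V) - real a * real (indep_num V E)) / ereal (real (free_indep_num V E))
          \<le> ereal_of_enat (ab_free_chrom a b V E)" for a b
    by (rule ab_free_chrom_lower_bound[OF G])
qed

end
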